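(* Let $N\ge1$, $1\le C\le N$, $T\ge 1$ be integers and $x^T\in[N]^T$ any request sequence. For every integer $k\ge 0$, $$T\big(\tilde{\mu}_k(x^T)-\pi^{\textsc{LZ}}(x^T)\big)\le \delta\big(c(T),L_T^{*,LZ}\big)+k\,c(T),$$ where $\delta(B,l)=\sqrt{2BCl\ln(Ne/C)}+CB\ln(Ne/C)$, $c(T)$ is the total number of nodes of the Lempel–Ziv parse tree after the $T$ requests (which is $O(T\log N/\log T)$), and $L_T^{*,LZ}$ is the minimum number of cache misses on $x^T$ of an offline prefetcher whose state at each round is the current node of the same Lempel–Ziv tree process and which caches a fixed set of $C$ files at each node.
   Context: Caching setting: a library of $N$ unit-sized files $[N]$ and a cache holding $C$ files; in round $t$ a (possibly random) set of $C$ files is cached, then $x_t\in[N]$ is requested, giving a hit (reward 1) if $x_t$ is cached and 0 otherwise. Hit rate = expected number of hits divided by $T$. A $k$-th order Markov prefetcher is a finite-state prefetcher with state set $[N]^k$ whose state at round $t$ is $(x_{t-1},\dots,x_{t-k})$ and which caches a set $f(s)$ of $C$ files depending only on the current state $s$; $\tilde\mu_k(x^T)$ is the maximum hit rate on $x^T$ over all such prefetching functions $f$. The LZ prefetcher: maintain an $N$-ary tree, initially a root with $N$ leaf children, and a current node, initially the root. At each round the current node is the state; each node runs its own independent copy of the \textsc{Sage} caching policy, fed only with requests arriving while that node is current, and the cache is chosen by the copy at the current node. After request $x_t$, move to the child labeled $x_t$; if that child is a leaf, make it an internal node by adding $N$ leaf children and return the current node to the root. $\pi^{\textsc{LZ}}(x^T)$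 is its hit rate. \textsc{Sage} policy: with learning rate $\eta>0$ and $R(i)$ the number of past requests (in its own stream) for file $i$, set $w(i)=\exp(\eta R(i))$ and marginals $p(i)=w(i)e_{C-1}(\mathbf w_{-i})/e_C(\mathbf w)$ ($e_m$ the elementary symmetric polynomial of order $m$, $\mathbf w_{-i}$ omitting coordinate $i$; these are the file-inclusion marginals of Hedge over all $C$-subsets of $[N]$ with reward $\mathbb 1(x_t\in A)$), and cache a random $C$-set with these marginals via Madow's systematic sampling (draw $U\sim\mathrm{Unif}[0,1]$, $P_0=0$, $P_i=P_{i-1}+p(i)$, select for each $m=0,\dots,C-1$ the $j$ with $P_{j-1}\le U+m\le P_j$). The learning rate is tuned adaptively so that on any stream of length $n$ its expected hits are at least those of the best fixed $C$-set minus $\sqrt{2Cl^*\ln(Ne/C)}+C\ln(Ne/C)$, $l^*$ being the misses of the best fixed $C$-set. *)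

theory Defs
  imports "HOL-Analysis.Analysis"
begin

text \<open>Files are the naturals below N, i.e. [N] = {..<N}. Rounds are 0-indexed:
  round t (t < T) serves request xs ! t.\<close>

definition lnNeC :: "nat \<Rightarrow> nat \<Rightarrow> real" where
  "lnNeC N C = ln (real N * exp 1 / real C)"

definition delta :: "nat \<Rightarrow> nat \<Rightarrow> nat \<Rightarrow> nat \<Rightarrow> real" where
  "delta N C B l = sqrt (2 * real B * real C * real l * lnNeC N C) + real C * real B * lnNeC N C"

definition esym :: "nat \<Rightarrow> nat set \<Rightarrow> (nat \<Rightarrow> real) \<Rightarrow> real" where
  "esym m I w = (\<Sum>S\<in>{S. S \<subseteq> I \<and> card S = m}. \<Prod>i\<in>S. w i)"

text \<open>Sage marginals after seeing its own stream s; eta s is the (adaptively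
  chosen) learning rate, which may depend on the stream seen so far.\<close>
definition sage_weight :: "(nat list \<Rightarrow> real) \<Rightarrow> nat list \<Rightarrow> nat \<Rightarrow> real" where
  "sage_weight eta s i = exp (eta s * real (count_list s i))"

definition sage_marg :: "nat \<Rightarrow> nat \<Rightarrow> (nat list \<Rightarrow> real) \<Rightarrow> nat list \<Rightarrow> nat \<Rightarrow> real" where
  "sage_marg N C eta s i =
     sage_weight eta s i * esym (C - 1) ({..<N} - {i}) (sage_weight eta s)
       / esym C {..<N} (sage_weight eta s)"

text \<open>Madow's systematic sampling with marginals p over files 0..N-1 and uniform U = u.\<close>
definition madow :: "nat \<Rightarrow> nat \<Rightarrow> (nat \<Rightarrow> real) \<Rightarrow> real \<Rightarrow> nat set" where
  "madow N C p u = {j. j < N \<and> (\<exists>m<C. (\<Sum>i<j. p i) \<le> u + real m \<and> u + real m \<le> (\<Sum>i<Suc j. p i))}"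

definition sage_hitprob :: "nat \<Rightarrow> nat \<Rightarrow> (nat list \<Rightarrow> real) \<Rightarrow> nat list \<Rightarrow> nat \<Rightarrow> real" where
  "sage_hitprob N C eta s x =
     measure lborel {u \<in> {0..1::real}. x \<in> madow N C (sage_marg N C eta s) u}"

definition csets :: "nat \<Rightarrow> nat \<Rightarrow> nat set set" where
  "csets N C = {A. A \<subseteq> {..<N} \<and> card A = C}"

definition fixed_hits :: "nat list \<Rightarrow> nat set \<Rightarrow> nat" where
  "fixed_hits s A = length (filter (\<lambda>y. y \<in> A) s)"

definition best_fixed_hits :: "nat \<Rightarrow> nat \<Rightarrow> nat list \<Rightarrow> nat" where
  "best_fixed_hits N C s = Max (fixed_hits s ` csets N C)"

definition sage_guarantee :: "nat \<Rightarrow> nat \<Rightarrow> (nat list \<Rightarrow> real) \<Rightarrow> bool" where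
  "sage_guarantee N C eta \<longleftrightarrow>
     (\<forall>s. set s \<subseteq> {..<N} \<longrightarrow>
        (\<Sum>t<length s. sage_hitprob N C eta (take t s) (s ! t))
          \<ge> real (best_fixed_hits N C s)
             - (sqrt (2 * real C * real (length s - best_fixed_hits N C s) * lnNeC N C)
                + real C * lnNeC N C))"

text \<open>init lists the k fictitious requests preceding round 0 (chronologically);
  the state at round t is (x_{t-1},...,x_{t-k}).\<close>
definition mstate :: "nat \<Rightarrow> nat list \<Rightarrow> nat list \<Rightarrow> nat \<Rightarrow> nat list" where
  "mstate k init xs t = rev (take k (drop t (init @ xs)))"

definition markov_hits :: "nat \<Rightarrow> nat list \<Rightarrow> nat list \<Rightarrow> (nat list \<Rightarrow> nat set) \<Rightarrow> nat" where
  "markov_hits k init xs f = card {t. t < length xs \<and> xs ! t \<in> f (mstate k init xs t)}"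

definition mu_tilde :: "nat \<Rightarrow> nat \<Rightarrow> nat \<Rightarrow> nat list \<Rightarrow> nat list \<Rightarrow> real" where
  "mu_tilde N C k init xs =
     real (Max {markov_hits k init xs f | f. \<forall>s. f s \<in> csets N C}) / real (length xs)"

text \<open>Internal nodes are words (paths from the root); the leaves are the children of
  internal nodes that are not internal.  The pair is (internal nodes, current node).\<close>
definition lz_step :: "nat list set \<times> nat list \<Rightarrow> nat \<Rightarrow> nat list set \<times> nat list" where
  "lz_step st x = (let ch = snd st @ [x] in
      if ch \<in> fst st then (fst st, ch) else (insert ch (fst st), []))"

definition lz_run :: "nat list \<Rightarrow> nat list set \<times> nat list" where
  "lz_run xs = foldl lz_step ({[]}, []) xs"

definition lz_state :: "nat list \<Rightarrow> nat \<Rightarrow> nat list" where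
  "lz_state xs t = snd (lz_run (take t xs))"

definition lz_nodes :: "nat \<Rightarrow> nat list \<Rightarrow> nat list set" where
  "lz_nodes N xs = insert [] {v @ [i] | v i. v \<in> fst (lz_run xs) \<and> i < N}"

definition lz_c :: "nat \<Rightarrow> nat list \<Rightarrow> nat" where
  "lz_c N xs = card (lz_nodes N xs)"

definition node_stream :: "nat list \<Rightarrow> nat \<Rightarrow> nat list" where
  "node_stream xs t = map (\<lambda>j. xs ! j) (filter (\<lambda>j. lz_state xs j = lz_state xs t) [0..<t])"

definition pi_LZ :: "nat \<Rightarrow> nat \<Rightarrow> (nat list \<Rightarrow> real) \<Rightarrow> nat list \<Rightarrow> real" where
  "pi_LZ N C eta xs =
     (\<Sum>t<length xs. sage_hitprob N C eta (node_stream xs t) (xs ! t)) / real (length xs)"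

definition lz_misses :: "nat list \<Rightarrow> (nat list \<Rightarrow> nat set) \<Rightarrow> nat" where
  "lz_misses xs f = card {t. t < length xs \<and> xs ! t \<notin> f (lz_state xs t)}"

definition L_star_LZ :: "nat \<Rightarrow> nat \<Rightarrow> nat list \<Rightarrow> nat" where
  "L_star_LZ N C xs = Min {lz_misses xs f | f. \<forall>v. f v \<in> csets N C}"

end

theory Submission
  imports Defs
begin

text \<open>Group the rounds by the Lempel--Ziv node that is current. On the substream of each
  visited node the LZ prefetcher runs its own copy of Sage, so the Sage guarantee bounds its
  regret against the best fixed C-set for that node. Summing over the at most c(T) visited
  nodes, Cauchy--Schwarz collects the square-root terms into delta(c(T), L), where L is the
  total number of misses of the per-node best sets, and L is at most the offline optimum
  over the LZ states. A k-th order Markov prefetcher is no better than a fixed set per node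
  on the rounds where the current node has depth at least k, since the node word then ends
  with the last k requests; each phrase of the parse spends at most k rounds at smaller
  depth, which accounts for the additive k c(T).\<close>

definition substream :: "(nat \<Rightarrow> 'a) \<Rightarrow> (nat \<Rightarrow> 'b) \<Rightarrow> nat \<Rightarrow> 'a \<Rightarrow> 'b list" where
  "substream st x T v = map x (filter (\<lambda>j. st j = v) [0..<T])"

lemma substream_Suc:
  "substream st x (Suc T) v = (if st T = v then substream st x T v @ [x T] else substream st x T v)"
  by (simp add: substream_def)

lemma sum_label_class_eq_sum_substream:
  fixes F :: "'b list \<Rightarrow> 'b \<Rightarrow> 'c::comm_monoid_add"
  shows "(\<Sum>t | t < T \<and> st t = v. F (substream st x t v) (x t))
    = (\<Sum>j<length (substream st x T v). F (take j (substream st x T v)) (substream st x T v ! j))"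
proof (induction T)
  case (Suc T)
  show ?case
  proof (cases "st T = v")
    case True
    then have "{t. t < Suc T \<and> st t = v} = insert T {t. t < T \<and> st t = v}" by auto
    with Suc True show ?thesis by (simp add: substream_Suc nth_append add.commute)
  next
    case False
    then have "{t. t < Suc T \<and> st t = v} = {t. t < T \<and> st t = v}" by (auto simp: less_Suc_eq)
    with Suc False show ?thesis by (simp add: substream_Suc)
  qed
qed (simp add: substream_def)

lemma sum_eq_sum_substreams:
  fixes F :: "'b list \<Rightarrow> 'b \<Rightarrow> 'c::comm_monoid_add"
  shows "(\<Sum>t<T. F (substream st x t (st t)) (x t))
    = (\<Sum>v\<in>st ` {..<T}. \<Sum>j<length (substream st x T v).
         F (take j (substream st x T v)) (substream st x T v ! j))"
proof -
  have "(\<Sum>t<T. F (substream st x t (st t)) (x t))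
      = (\<Sum>v\<in>st ` {..<T}. \<Sum>t | t < T \<and> st t = v. F (substream st x t v) (x t))"
    by (subst sum.image_gen[of "{..<T}" _ st]) (auto intro!: sum.cong)
  then show ?thesis by (simp only: sum_label_class_eq_sum_substream)
qed

lemma card_hits_eq_sum_fixed_hits:
  "card {t. t < T \<and> x t \<in> g (st t)} = (\<Sum>v\<in>st ` {..<T}. fixed_hits (substream st x T v) (g v))"
proof -
  have "card {t. t < T \<and> x t \<in> g (st t)} = (\<Sum>v\<in>st ` {..<T}. card {t. t < T \<and> st t = v \<and> x t \<in> g v})"
    by (subst card_UN_disjoint[symmetric]) (auto intro!: arg_cong[where f = card])
  also have "\<dots> = (\<Sum>v\<in>st ` {..<T}. fixed_hits (substream st x T v) (g v))"
  proof (rule sum.cong[OF refl])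
    fix v
    have "fixed_hits (substream st x T v) (g v)
        = length (filter (\<lambda>j. st j = v \<and> x j \<in> g v) [0..<T])"
      by (simp add: fixed_hits_def substream_def filter_map comp_def conj_commute)
    also have "\<dots> = card {t. t < T \<and> st t = v \<and> x t \<in> g v}"
      by (subst distinct_card[symmetric]) (auto intro: arg_cong[where f = card])
    finally show "card {t. t < T \<and> st t = v \<and> x t \<in> g v} = fixed_hits (substream st x T v) (g v)" ..
  qed
  finally show ?thesis .
qed

lemma finite_csets: "finite (csets N C)"
  by (rule finite_subset[of _ "Pow {..<N}"]) (auto simp: csets_def)

lemma lessThan_in_csets: "C \<le> N \<Longrightarrow> {..<C} \<in> csets N C"
  by (auto simp: csets_def)

lemma fixed_hits_le_best_fixed_hits:
  "A \<in> csets N C \<Longrightarrow> fixed_hits s A \<le> best_fixed_hits N C s"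
  unfolding best_fixed_hits_def using finite_csets by (intro Max_ge) auto

lemma fixed_hits_Compl: "fixed_hits s (- A) = length s - fixed_hits s A"
  using sum_length_filter_compl[of "\<lambda>y. y \<in> A" s] by (simp add: fixed_hits_def)

lemma lnNeC_ge_1: "1 \<le> C \<Longrightarrow> C \<le> N \<Longrightarrow> 1 \<le> lnNeC N C"
proof -
  assume "1 \<le> C" "C \<le> N"
  then have "exp 1 \<le> real N * exp 1 / real C" by (simp add: field_simps)
  then show ?thesis
    unfolding lnNeC_def by (metis exp_gt_zero ln_exp ln_le_cancel_iff order_less_le_trans)
qed

lemma delta_mono:
  "0 \<le> lnNeC N C \<Longrightarrow> B \<le> B' \<Longrightarrow> l \<le> l' \<Longrightarrow> delta N C B l \<le> delta N C B' l'"
  unfolding delta_def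
  by (intro add_mono real_sqrt_le_mono mult_mono mult_right_mono) auto

lemma sum_sqrt_le_sqrt_card_mult_sum:
  fixes a :: "'a \<Rightarrow> real"
  assumes "\<And>v. v \<in> V \<Longrightarrow> 0 \<le> a v"
  shows "(\<Sum>v\<in>V. sqrt (a v)) \<le> sqrt (real (card V) * (\<Sum>v\<in>V. a v))"
proof -
  have "(\<Sum>v\<in>V. sqrt (a v))\<^sup>2 \<le> (\<Sum>v\<in>V. (sqrt (a v))\<^sup>2) * card V"
    by (rule sum_squared_le_sum_of_squares)
  also have "(\<Sum>v\<in>V. (sqrt (a v))\<^sup>2) = (\<Sum>v\<in>V. a v)"
    using assms by (intro sum.cong) auto
  finally show ?thesis by (intro real_le_rsqrt) (simp add: mult.commute)
qed

abbreviation sage_hits :: "nat \<Rightarrow> nat \<Rightarrow> (nat list \<Rightarrow> real) \<Rightarrow> nat list \<Rightarrow> real" where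
  "sage_hits N C eta s \<equiv> \<Sum>j<length s. sage_hitprob N C eta (take j s) (s ! j)"

lemma sage_regret_sum_le_delta:
  assumes "sage_guarantee N C eta" and "1 \<le> C" and "C \<le> N"
    and "\<And>v. v \<in> V \<Longrightarrow> set (s v) \<subseteq> {..<N}"
  shows "(\<Sum>v\<in>V. best_fixed_hits N C (s v) - sage_hits N C eta (s v))
    \<le> delta N C (card V) (\<Sum>v\<in>V. length (s v) - best_fixed_hits N C (s v))"
proof -
  define Ln where "Ln = lnNeC N C"
  define l where "l v = length (s v) - best_fixed_hits N C (s v)" for v
  have "Ln \<ge> 0" using lnNeC_ge_1[OF assms(2,3)] by (simp add: Ln_def)
  have regret: "best_fixed_hits N C (s v) - sage_hits N C eta (s v)
      \<le> sqrt (2 * real C * real (l v) * Ln) + real C * Ln" if "v \<in> V" for v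
    using assms(1) assms(4)[OF that] unfolding sage_guarantee_def l_def Ln_def by fastforce
  have "(\<Sum>v\<in>V. best_fixed_hits N C (s v) - sage_hits N C eta (s v))
      \<le> (\<Sum>v\<in>V. sqrt (2 * real C * real (l v) * Ln) + real C * Ln)"
    by (rule sum_mono) (rule regret)
  also have "\<dots> = (\<Sum>v\<in>V. sqrt (2 * real C * real (l v) * Ln)) + real (card V) * (real C * Ln)"
    by (simp add: sum.distrib)
  also have "(\<Sum>v\<in>V. sqrt (2 * real C * real (l v) * Ln))
      \<le> sqrt (real (card V) * (\<Sum>v\<in>V. 2 * real C * real (l v) * Ln))"
    using \<open>Ln \<ge> 0\<close> by (intro sum_sqrt_le_sqrt_card_mult_sum) simp
  also have "\<dots> = sqrt (2 * real (card V) * real C * real (\<Sum>v\<in>V. l v) * Ln)"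
    by (simp add: sum_distrib_left sum_distrib_right mult_ac)
  finally show ?thesis by (simp add: delta_def l_def Ln_def mult_ac)
qed

lemma lz_run_snoc: "lz_run (ys @ [a]) = lz_step (lz_run ys) a"
  by (simp add: lz_run_def)

lemma lz_run_take_Suc:
  "t < length xs \<Longrightarrow> lz_run (take (Suc t) xs) = lz_step (lz_run (take t xs)) (xs ! t)"
  by (simp add: take_Suc_conv_app_nth lz_run_snoc)

lemma lz_run_invariant:
  "finite (fst (lz_run ys)) \<and> [] \<in> fst (lz_run ys) \<and> snd (lz_run ys) \<in> fst (lz_run ys)
    \<and> (\<exists>p. ys = p @ snd (lz_run ys))"
proof (induction ys rule: rev_induct)
  case (snoc a ys)
  obtain I v where r: "lz_run ys = (I, v)" by fastforce
  with snoc show ?case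
    by (auto simp: lz_run_snoc lz_step_def Let_def)
qed (simp add: lz_run_def)

lemma lz_internal_mono: "fst (lz_run ys) \<subseteq> fst (lz_run (ys @ zs))"
proof (induction zs rule: rev_induct)
  case (snoc a zs)
  then show ?case
    by (auto simp: lz_run_snoc[of "ys @ zs", simplified] lz_step_def Let_def)
qed simp

lemma lz_state_in_lz_internal: "lz_state xs t \<in> fst (lz_run xs)"
proof -
  have "lz_state xs t \<in> fst (lz_run (take t xs))"
    using lz_run_invariant[of "take t xs"] by (simp add: lz_state_def)
  also have "\<dots> \<subseteq> fst (lz_run (take t xs @ drop t xs))" by (rule lz_internal_mono)
  finally show ?thesis by simp
qed

lemma card_lz_internal_less_lz_c:
  assumes "N \<ge> 1"
  shows "card (fst (lz_run xs)) < lz_c N xs"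
proof -
  define I where "I = fst (lz_run xs)"
  have "finite I" using lz_run_invariant[of xs] by (simp add: I_def)
  have "lz_nodes N xs \<subseteq> insert [] ((\<lambda>(v, i). v @ [i]) ` (I \<times> {..<N}))"
    by (auto simp: lz_nodes_def I_def)
  then have "finite (lz_nodes N xs)" by (rule finite_subset) (simp add: \<open>finite I\<close>)
  moreover have "insert [] ((\<lambda>v. v @ [0]) ` I) \<subseteq> lz_nodes N xs"
    using assms by (auto simp: lz_nodes_def I_def)
  moreover have "card (insert [] ((\<lambda>v. v @ [0]) ` I)) = Suc (card I)"
    using \<open>finite I\<close> by (subst card_insert_disjoint) (auto simp: card_image inj_on_def)
  ultimately show ?thesis unfolding lz_c_def I_def by (metis card_mono Suc_le_eq)
qed

lemma mstate_eq_lz_state_suffix: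
  assumes "length init = k" and "t \<le> length xs" and "k \<le> length (lz_state xs t)"
  shows "mstate k init xs t = rev (drop (length (lz_state xs t) - k) (lz_state xs t))"
proof -
  define v where "v = lz_state xs t"
  obtain p where p: "take t xs = p @ v"
    using lz_run_invariant[of "take t xs"] by (auto simp: v_def lz_state_def)
  have "length p + length v = t" using arg_cong[OF p, of length] assms(2) by simp
  then have "t - (k + length p) = length v - k" by arith
  then have "take k (drop t (init @ xs)) = drop (length v - k) v"
    using assms p \<open>length p + length v = t\<close> by (simp add: v_def take_drop flip: p)
  then show ?thesis by (simp add: mstate_def v_def)
qed

lemma card_Collect_less_Suc:
  "card {t. t < Suc T \<and> P t} = card {t. t < T \<and> P t} + of_bool (P T)"
proof -
  have "{t. t < Suc T \<and> P t} = (if P T then insert T {t. t < T \<and> P t} else {t. t < T \<and> P t})"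
    by (auto simp: less_Suc_eq)
  then show ?thesis by auto
qed

text \<open>Within one phrase of the parse the depth of the current node grows by one per round,
  so each phrase spends at most k rounds at depth below k; the current, unfinished phrase
  has spent at most min (depth) k of them.\<close>
lemma card_shallow_rounds_invariant:
  assumes "T \<le> length xs"
  shows "card {t. t < T \<and> length (lz_state xs t) < k} + k
     \<le> k * card (fst (lz_run (take T xs))) + min (length (lz_state xs T)) k"
  using assms
proof (induction T)
  case 0
  then show ?case by (simp add: lz_state_def lz_run_def)
next
  case (Suc T)
  obtain I v where r: "lz_run (take T xs) = (I, v)" by fastforce
  have "finite I" using lz_run_invariant[of "take T xs"] r by simp
  have IH: "card {t. t < T \<and> length (lz_state xs t) < k} + k \<le> k * card I + min (length v) k"
    using Suc r by (simp add: lz_state_def)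
  have step: "lz_run (take (Suc T) xs) = lz_step (I, v) (xs ! T)"
    using Suc.prems r lz_run_take_Suc by simp
  show ?case
  proof (cases "v @ [xs ! T] \<in> I")
    case True
    then have "lz_run (take (Suc T) xs) = (I, v @ [xs ! T])" using step by (simp add: lz_step_def)
    then show ?thesis using IH r by (auto simp: card_Collect_less_Suc lz_state_def)
  next
    case False
    then have "lz_run (take (Suc T) xs) = (insert (v @ [xs ! T]) I, [])"
      using step by (simp add: lz_step_def)
    moreover have "card (insert (v @ [xs ! T]) I) = Suc (card I)" using \<open>finite I\<close> False by simp
    ultimately show ?thesis using IH r by (auto simp: card_Collect_less_Suc lz_state_def)
  qed
qed

lemma card_shallow_rounds_le:
  "card {t. t < length xs \<and> length (lz_state xs t) < k} \<le> k * card (fst (lz_run xs))"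
  using card_shallow_rounds_invariant[of "length xs" xs k] by simp

abbreviation lz_visited :: "nat list \<Rightarrow> nat list set" where
  "lz_visited xs \<equiv> lz_state xs ` {..<length xs}"

abbreviation lz_substream :: "nat list \<Rightarrow> nat list \<Rightarrow> nat list" where
  "lz_substream xs v \<equiv> substream (lz_state xs) ((!) xs) (length xs) v"

lemma set_lz_substream_subset: "set xs \<subseteq> A \<Longrightarrow> set (lz_substream xs v) \<subseteq> A"
  by (auto simp: substream_def)

lemma card_lz_visited_less_lz_c: "N \<ge> 1 \<Longrightarrow> card (lz_visited xs) < lz_c N xs"
  using card_mono[of "fst (lz_run xs)" "lz_visited xs"] lz_run_invariant[of xs]
    lz_state_in_lz_internal[of xs] card_lz_internal_less_lz_c[of N xs]
  by fastforce

lemma ex_Max_attained: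
  fixes g :: "'a \<Rightarrow> nat"
  assumes "\<And>f. P f \<Longrightarrow> g f \<le> n" and "P f0"
  shows "\<exists>f. P f \<and> Max {g f | f. P f} = g f"
proof -
  have "finite {g f | f. P f}" using assms(1) by (auto simp: finite_nat_set_iff_bounded_le)
  then have "Max {g f | f. P f} \<in> {g f | f. P f}" using assms(2) by (intro Max_in) auto
  then show ?thesis by auto
qed

lemma ex_Min_attained:
  fixes g :: "'a \<Rightarrow> nat"
  assumes "\<And>f. P f \<Longrightarrow> g f \<le> n" and "P f0"
  shows "\<exists>f. P f \<and> Min {g f | f. P f} = g f"
proof -
  have "finite {g f | f. P f}" using assms(1) by (auto simp: finite_nat_set_iff_bounded_le)
  then have "Min {g f | f. P f} \<in> {g f | f. P f}" using assms(2) by (intro Min_in) auto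
  then show ?thesis by auto
qed

lemma card_rounds_le_length: "card {t. t < length xs \<and> P t} \<le> length xs"
  using card_mono[of "{..<length xs}" "{t. t < length xs \<and> P t}"] by auto

lemma markov_hits_le_lz:
  assumes "N \<ge> 1" and "length init = k" and "\<forall>s. f s \<in> csets N C"
  shows "markov_hits k init xs f
    \<le> (\<Sum>v\<in>lz_visited xs. best_fixed_hits N C (lz_substream xs v)) + k * lz_c N xs"
proof -
  define g where "g v = f (rev (drop (length v - k) v))" for v
  have sub: "{t. t < length xs \<and> xs ! t \<in> f (mstate k init xs t)}
      \<subseteq> {t. t < length xs \<and> xs ! t \<in> g (lz_state xs t)}
        \<union> {t. t < length xs \<and> length (lz_state xs t) < k}"
    using mstate_eq_lz_state_suffix[OF assms(2)] by (auto simp: g_def not_less)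
  then have "markov_hits k init xs f
      \<le> card {t. t < length xs \<and> xs ! t \<in> g (lz_state xs t)}
        + card {t. t < length xs \<and> length (lz_state xs t) < k}"
    unfolding markov_hits_def by (intro order_trans[OF card_mono[OF _ sub] card_Un_le]) simp
  also have "card {t. t < length xs \<and> xs ! t \<in> g (lz_state xs t)}
      = (\<Sum>v\<in>lz_visited xs. fixed_hits (lz_substream xs v) (g v))"
    by (rule card_hits_eq_sum_fixed_hits)
  also have "\<dots> \<le> (\<Sum>v\<in>lz_visited xs. best_fixed_hits N C (lz_substream xs v))"
    using assms(3) by (intro sum_mono fixed_hits_le_best_fixed_hits) (simp add: g_def)
  also have "card {t. t < length xs \<and> length (lz_state xs t) < k} \<le> k * lz_c N xs"
    using card_shallow_rounds_le[of xs k] card_lz_internal_less_lz_c[OF assms(1), of xs]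
    by (meson less_imp_le mult_le_mono2 order_trans)
  finally show ?thesis by simp
qed

lemma mu_tilde_le_lz:
  assumes "N \<ge> 1" and "C \<le> N" and "xs \<noteq> []" and "length init = k"
  shows "real (length xs) * mu_tilde N C k init xs
    \<le> (\<Sum>v\<in>lz_visited xs. best_fixed_hits N C (lz_substream xs v)) + real k * real (lz_c N xs)"
proof -
  obtain f where f: "\<forall>s. f s \<in> csets N C"
    and Max_eq: "Max {markov_hits k init xs f | f. \<forall>s. f s \<in> csets N C} = markov_hits k init xs f"
    using ex_Max_attained[of "\<lambda>f. \<forall>s. f s \<in> csets N C" "markov_hits k init xs" "length xs"
        "\<lambda>_. {..<C}"]
      lessThan_in_csets[OF assms(2)] by (auto simp: markov_hits_def card_rounds_le_length)
  have "real (length xs) * mu_tilde N C k init xs = markov_hits k init xs f"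
    using assms(3) by (simp add: mu_tilde_def Max_eq)
  also have "\<dots> \<le> (\<Sum>v\<in>lz_visited xs. best_fixed_hits N C (lz_substream xs v)) + k * lz_c N xs"
    using markov_hits_le_lz[OF assms(1,4) f, where xs = xs] by (simp only: of_nat_le_iff)
  finally show ?thesis by simp
qed

lemma sum_substream_misses_le_L_star_LZ:
  assumes "C \<le> N"
  shows "(\<Sum>v\<in>lz_visited xs. length (lz_substream xs v) - best_fixed_hits N C (lz_substream xs v))
    \<le> L_star_LZ N C xs"
proof -
  obtain f where f: "\<forall>v. f v \<in> csets N C" and L_eq: "L_star_LZ N C xs = lz_misses xs f"
    using ex_Min_attained[of "\<lambda>f. \<forall>v. f v \<in> csets N C" "lz_misses xs" "length xs" "\<lambda>_. {..<C}"]
      lessThan_in_csets[OF assms] by (auto simp: L_star_LZ_def lz_misses_def card_rounds_le_length)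
  have "L_star_LZ N C xs = card {t. t < length xs \<and> xs ! t \<in> - f (lz_state xs t)}"
    by (simp add: L_eq lz_misses_def)
  also have "\<dots> = (\<Sum>v\<in>lz_visited xs. fixed_hits (lz_substream xs v) (- f v))"
    by (rule card_hits_eq_sum_fixed_hits)
  finally show ?thesis
    using f
    by (auto simp: fixed_hits_Compl intro!: sum_mono diff_le_mono2 fixed_hits_le_best_fixed_hits)
qed

lemma pi_LZ_eq_sum_sage_hits:
  assumes "xs \<noteq> []"
  shows "real (length xs) * pi_LZ N C eta xs
    = (\<Sum>v\<in>lz_visited xs. sage_hits N C eta (lz_substream xs v))"
proof -
  have "node_stream xs t = substream (lz_state xs) ((!) xs) t (lz_state xs t)" for t
    by (simp add: node_stream_def substream_def)
  then show ?thesis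
    using assms by (simp add: pi_LZ_def sum_eq_sum_substreams[where F = "sage_hitprob N C eta"])
qed

theorem theorem3:
  fixes N C T k :: nat and xs init :: "nat list" and eta :: "nat list \<Rightarrow> real"
  assumes "N \<ge> 1" and "1 \<le> C" and "C \<le> N" and "T \<ge> 1"
    and "length xs = T" and "set xs \<subseteq> {..<N}"
    and "length init = k" and "set init \<subseteq> {..<N}"
    and "\<forall>s. eta s > 0" and "sage_guarantee N C eta"
  shows "real T * (mu_tilde N C k init xs - pi_LZ N C eta xs)
           \<le> delta N C (lz_c N xs) (L_star_LZ N C xs) + real k * real (lz_c N xs)"
proof -
  define b where "b v = best_fixed_hits N C (lz_substream xs v)" for v
  define l where "l v = length (lz_substream xs v) - b v" for v
  have "xs \<noteq> []" using assms(4,5) by auto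
  have "(\<Sum>v\<in>lz_visited xs. b v - sage_hits N C eta (lz_substream xs v))
      \<le> delta N C (card (lz_visited xs)) (\<Sum>v\<in>lz_visited xs. l v)"
    unfolding b_def l_def
    by (rule sage_regret_sum_le_delta[OF assms(10,2,3) set_lz_substream_subset[OF assms(6)]])
  also have "\<dots> \<le> delta N C (lz_c N xs) (L_star_LZ N C xs)"
    using lnNeC_ge_1[OF assms(2,3)] less_imp_le[OF card_lz_visited_less_lz_c[OF assms(1)]]
      sum_substream_misses_le_L_star_LZ[OF assms(3)]
    by (intro delta_mono) (auto simp: l_def b_def)
  finally show ?thesis
    using mu_tilde_le_lz[OF assms(1,3) \<open>xs \<noteq> []\<close> assms(7)] pi_LZ_eq_sum_sage_hits[OF \<open>xs \<noteq> []\<close>]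
    by (simp add: assms(5) b_def sum_subtractf right_diff_distrib)
qed

end
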